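(* Let $A$ be a finite set and $F:A^{\mathbb{Z}}\to A^{\mathbb{Z}}$ an ergodic cellular automaton. Then for every $\epsilon>0$ there is a finite collection of cylinders $\{U_i\}_{i\in I}$ such that $\mu\left(\bigcup_{i\in I}U_i\right)<\epsilon$ and $\{c\in A^{\mathbb{Z}}\mid F^t(c)\in\bigcup_{i\in I}U_i\text{ for some }t\in\mathbb{N}\}=A^{\mathbb{Z}}$.
   Context: A cylinder is a set $\mathrm{cyl}(w,i)=\{c\in A^{\mathbb{Z}}\mid c(i)c(i+1)\cdots c(i+|w|-1)=w\}$ for a nonempty word $w$ over $A$ and $i\in\mathbb{Z}$. $A^{\mathbb{Z}}$ has the product topology (generated by cylinders), and $\mu$ is the uniform Bernoulli probability measure on the Borel sets with $\mu(\mathrm{cyl}(w,i))=|A|^{-|w|}$. A cellular automaton is a map $F(c)(i)=f(c(i+n_1),\dots,c(i+n_m))$ for a fixed vector $(n_1,\dots,n_m)\in\mathbb{Z}^m$ and local rule $f:A^m\to A$. $F$ is measure preserving if $\mu(F^{-1}(S))=\mu(S)$ for all Borel $S$, and ergodic if it is measure preserving and every Borel $S$ with $F^{-1}(S)=S$ has $\mu(S)\in\{0,1\}$. $\mathbb{N}=\{0,1,2,\dots\}$. *)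

theory Defs
  imports "HOL-Probability.Probability"
begin

type_synonym 'a config = "int \<Rightarrow> 'a"

definition cyl :: "'a list \<Rightarrow> int \<Rightarrow> 'a config set" where
  "cyl w i = {c. \<forall>j<length w. c (i + int j) = w ! j}"

definition is_cylinder :: "'a config set \<Rightarrow> bool" where
  "is_cylinder U \<longleftrightarrow> (\<exists>w i. w \<noteq> [] \<and> U = cyl w i)"

definition bernoulli_mu :: "('a::finite) config measure" where
  "bernoulli_mu = PiM UNIV (\<lambda>_::int. measure_pmf (pmf_of_set (UNIV :: 'a set)))"

definition cellular_automaton :: "('a config \<Rightarrow> 'a config) \<Rightarrow> bool" where
  "cellular_automaton F \<longleftrightarrow>
     (\<exists>(ns :: int list) (f :: 'a list \<Rightarrow> 'a).
        \<forall>c i. F c i = f (map (\<lambda>n. c (i + n)) ns))"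

definition measure_preserving :: "(('a::finite) config \<Rightarrow> 'a config) \<Rightarrow> bool" where
  "measure_preserving F \<longleftrightarrow> F \<in> measurable bernoulli_mu bernoulli_mu \<and>
     (\<forall>S \<in> sets bernoulli_mu. emeasure bernoulli_mu (F -` S \<inter> space bernoulli_mu) = emeasure bernoulli_mu S)"

definition ergodic :: "(('a::finite) config \<Rightarrow> 'a config) \<Rightarrow> bool" where
  "ergodic F \<longleftrightarrow> measure_preserving F \<and>
     (\<forall>S \<in> sets bernoulli_mu. F -` S = S \<longrightarrow>
        measure bernoulli_mu S = 0 \<or> measure bernoulli_mu S = 1)"

end

theory Submission
  imports Defs
begin

text \<open>
  Fix a cylinder \<open>U\<close> of positive measure below \<open>\<epsilon>/2\<close>. By ergodicity almost every configuration
  eventually enters \<open>U\<close>, so the set \<open>K\<close> of configurations that never do is null. Since \<open>F\<close> is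
  local, \<open>K\<close> is closed, hence it is the decreasing intersection of its neighbourhoods
  "agrees with some point of \<open>K\<close> on the window \<open>[-N, N]\<close>", and each such neighbourhood is a finite
  union of cylinders. By continuity of the measure one of them has measure below \<open>\<epsilon>/2\<close>; together
  with \<open>U\<close> it gives the required cylinders, as every configuration either lies in it or visits \<open>U\<close>.
\<close>

lemma space_bernoulli_mu [simp]: "space (bernoulli_mu :: ('a::finite) config measure) = UNIV"
  by (simp add: bernoulli_mu_def space_PiM)

lemma prob_space_bernoulli_mu: "prob_space (bernoulli_mu :: ('a::finite) config measure)"
  unfolding bernoulli_mu_def by (rule prob_space_PiM) (simp add: prob_space_measure_pmf)

lemma cell_eq_in_sets: "{c. c k = a} \<in> sets (bernoulli_mu :: ('a::finite) config measure)"
proof -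
  have "(\<lambda>c. c k) -` {a} \<inter> space (bernoulli_mu :: 'a config measure) \<in> sets bernoulli_mu"
    unfolding bernoulli_mu_def by (rule measurable_sets[OF measurable_component_singleton]) auto
  then show ?thesis by (simp add: vimage_def)
qed

lemma cyl_in_sets: "cyl w i \<in> sets (bernoulli_mu :: ('a::finite) config measure)"
proof -
  have "cyl w i = {c \<in> space (bernoulli_mu :: 'a config measure).
                     \<forall>j\<in>{..<length w}. c (i + int j) \<in> {w ! j}}"
    by (auto simp: cyl_def)
  also have "\<dots> \<in> sets bernoulli_mu"
    by (intro sets.sets_Collect_finite_All) (auto simp: cell_eq_in_sets)
  finally show ?thesis .
qed

lemma measure_cyl_replicate:
  "measure (bernoulli_mu :: ('a::finite) config measure) (cyl (replicate n a) 0) = (1 / real CARD('a)) ^ n"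
proof -
  interpret product_prob_space "\<lambda>_::int. measure_pmf (pmf_of_set (UNIV :: 'a set))" UNIV
    by unfold_locales
  have "cyl (replicate n a) 0 = {x \<in> space bernoulli_mu. \<forall>i\<in>int ` {..<n}. x i \<in> {a}}"
    by (auto simp: cyl_def)
  then have "emeasure bernoulli_mu (cyl (replicate n a) 0) =
      (\<Prod>i\<in>int ` {..<n}. emeasure (measure_pmf (pmf_of_set (UNIV :: 'a set))) {a})"
    using emeasure_PiM_Collect[of "int ` {..<n}" "\<lambda>_. {a}"] by (simp add: bernoulli_mu_def)
  also have "\<dots> = ennreal ((1 / real CARD('a)) ^ n)"
    by (simp add: emeasure_pmf_single card_image ennreal_power)
  finally show ?thesis
    by (simp add: finite_measure.emeasure_eq_measure[OF prob_space.finite_measure[OF prob_space_bernoulli_mu]])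
qed


subsection \<open>Locality of cellular automata\<close>

definition agree_on_window :: "nat \<Rightarrow> 'a config \<Rightarrow> 'a config \<Rightarrow> bool" where
  "agree_on_window N c d \<longleftrightarrow> (\<forall>i. \<bar>i\<bar> \<le> int N \<longrightarrow> c i = d i)"

definition locally_determined :: "('a config \<Rightarrow> 'b config) \<Rightarrow> bool" where
  "locally_determined G \<longleftrightarrow>
     (\<forall>m. \<exists>R. \<forall>c d. agree_on_window R c d \<longrightarrow> agree_on_window m (G c) (G d))"

lemma locally_determined_id: "locally_determined id"
  unfolding locally_determined_def by auto

lemma locally_determined_comp:
  assumes "locally_determined G" "locally_determined H"
  shows "locally_determined (G \<circ> H)"
  using assms unfolding locally_determined_def o_def by metis

lemma cellular_automaton_locally_determined:
  assumes "cellular_automaton F"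
  shows "locally_determined F"
  unfolding locally_determined_def
proof
  fix m
  obtain ns f where F: "\<And>c i. F c i = f (map (\<lambda>n. c (i + n)) ns)"
    using assms unfolding cellular_automaton_def by blast
  define R where "R = m + sum_list (map (\<lambda>n. nat \<bar>n\<bar>) ns)"
  have offset_le: "\<bar>n\<bar> \<le> int R - int m" if "n \<in> set ns" for n
    using member_le_sum_list[of "nat \<bar>n\<bar>" "map (\<lambda>n. nat \<bar>n\<bar>) ns"] that
    unfolding R_def by auto
  show "\<exists>R. \<forall>c d. agree_on_window R c d \<longrightarrow> agree_on_window m (F c) (F d)"
  proof (intro exI[of _ R] allI impI)
    fix c d :: "'a config"
    assume agree: "agree_on_window R c d"
    have "F c i = F d i" if "\<bar>i\<bar> \<le> int m" for i
      unfolding F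
    proof (rule arg_cong[where f = f], rule map_cong[OF refl])
      fix n
      assume "n \<in> set ns"
      then have "\<bar>i + n\<bar> \<le> int R"
        using offset_le that by fastforce
      then show "c (i + n) = d (i + n)"
        using agree by (simp add: agree_on_window_def)
    qed
    then show "agree_on_window m (F c) (F d)"
      by (simp add: agree_on_window_def)
  qed
qed

lemma cellular_automaton_funpow_locally_determined:
  assumes "cellular_automaton F"
  shows "locally_determined (F ^^ t)"
proof (induction t)
  case 0
  then show ?case using locally_determined_id by (simp add: id_def)
next
  case (Suc t)
  then show ?case
    using locally_determined_comp[OF cellular_automaton_locally_determined[OF assms]]
    by (simp only: funpow.simps)
qed


lemma measure_preserving_funpow_measurable:
  assumes "measure_preserving (F :: ('a::finite) config \<Rightarrow> 'a config)"
  shows "F ^^ t \<in> measurable bernoulli_mu bernoulli_mu"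
proof (induction t)
  case (Suc t)
  have "F \<in> measurable bernoulli_mu bernoulli_mu"
    using assms by (simp add: measure_preserving_def)
  then show ?case
    using Suc by (simp add: measurable_comp)
qed simp

lemma measure_preserving_vimage_funpow_in_sets:
  assumes "measure_preserving (F :: ('a::finite) config \<Rightarrow> 'a config)" "S \<in> sets bernoulli_mu"
  shows "(F ^^ t) -` S \<in> sets bernoulli_mu"
  using measurable_sets[OF measure_preserving_funpow_measurable[OF assms(1)] assms(2)] by simp

lemma measure_preserving_emeasure_vimage_funpow:
  assumes "measure_preserving (F :: ('a::finite) config \<Rightarrow> 'a config)" "S \<in> sets bernoulli_mu"
  shows "emeasure bernoulli_mu ((F ^^ t) -` S) = emeasure bernoulli_mu S"
proof (induction t)
  case 0
  then show ?case by simp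
next
  case (Suc t)
  have "(F ^^ Suc t) -` S = F -` ((F ^^ t) -` S)"
    by (simp only: funpow_Suc_right vimage_comp)
  also have "emeasure bernoulli_mu \<dots> = emeasure bernoulli_mu ((F ^^ t) -` S)"
    using assms(1) measure_preserving_vimage_funpow_in_sets[OF assms]
    unfolding measure_preserving_def by simp
  also have "\<dots> = emeasure bernoulli_mu S"
    by (rule Suc.IH)
  finally show ?case .
qed

text \<open>Ergodicity only speaks about strictly invariant sets, so a set with \<open>F\<^sup>-\<^sup>1 W \<subseteq> W\<close>
  is replaced by the invariant set \<open>\<Inter>n. F\<^sup>-\<^sup>n W\<close>, which has the same measure.\<close>

lemma measure_preserving_subinvariant_invariant_core:
  fixes F :: "('a::finite) config \<Rightarrow> 'a config"
  assumes mp: "measure_preserving F" and W: "W \<in> sets bernoulli_mu" and sub: "F -` W \<subseteq> W"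
  obtains V where "V \<in> sets bernoulli_mu" "F -` V = V"
    "measure bernoulli_mu V = measure bernoulli_mu W"
proof
  interpret P: prob_space "bernoulli_mu :: 'a config measure" by (rule prob_space_bernoulli_mu)
  define A where "A n = (F ^^ n) -` W" for n
  have A_Suc: "A (Suc n) = F -` A n" for n
    by (simp only: A_def funpow_Suc_right vimage_comp)
  have A_sets: "range A \<subseteq> sets bernoulli_mu"
    using measure_preserving_vimage_funpow_in_sets[OF mp W] by (auto simp: A_def)
  have "A (Suc n) \<subseteq> A n" for n
  proof -
    have "A (Suc n) = (F ^^ n) -` (F -` W)"
      by (simp only: A_def funpow.simps vimage_comp)
    then show ?thesis
      using sub by (auto simp: A_def)
  qed
  then have "decseq A"
    by (rule decseq_SucI)
  have "(\<lambda>n. measure bernoulli_mu (A n)) \<longlonglongrightarrow> measure bernoulli_mu (\<Inter>n. A n)"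
    by (rule P.finite_Lim_measure_decseq[OF A_sets \<open>decseq A\<close>])
  moreover have "measure bernoulli_mu (A n) = measure bernoulli_mu W" for n
    using measure_preserving_emeasure_vimage_funpow[OF mp W, of n]
    by (simp add: A_def P.emeasure_eq_measure)
  ultimately show "measure bernoulli_mu (\<Inter>n. A n) = measure bernoulli_mu W"
    by (simp add: LIMSEQ_const_iff)
  show "(\<Inter>n. A n) \<in> sets bernoulli_mu"
    using A_sets by auto
  have "F -` (\<Inter>n. A n) = (\<Inter>n. A (Suc n))"
    by (auto simp: A_Suc)
  also have "\<dots> = (\<Inter>n. A n)"
  proof (intro equalityI subsetI INT_I)
    fix c n
    assume "c \<in> (\<Inter>n. A (Suc n))"
    then show "c \<in> A n"
      using \<open>A (Suc 0) \<subseteq> A 0\<close> by (cases n) auto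
  qed auto
  finally show "F -` (\<Inter>n. A n) = (\<Inter>n. A n)" .
qed

lemma ergodic_almost_surely_visits:
  fixes F :: "('a::finite) config \<Rightarrow> 'a config"
  assumes erg: "ergodic F" and U: "U \<in> sets bernoulli_mu" and pos: "measure bernoulli_mu U > 0"
  shows "measure bernoulli_mu {c. \<forall>t. (F ^^ t) c \<notin> U} = 0"
proof -
  interpret P: prob_space "bernoulli_mu :: 'a config measure" by (rule prob_space_bernoulli_mu)
  have mp: "measure_preserving F"
    using erg by (simp add: ergodic_def)
  define W where "W = (\<Union>t. (F ^^ t) -` U)"
  have W_sets: "W \<in> sets bernoulli_mu"
    using measure_preserving_vimage_funpow_in_sets[OF mp U] by (auto simp: W_def)
  have "F -` W \<subseteq> W"
  proof
    fix c
    assume "c \<in> F -` W"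
    then obtain t where "(F ^^ t) (F c) \<in> U"
      by (auto simp: W_def)
    then have "(F ^^ Suc t) c \<in> U"
      by (simp only: funpow_Suc_right o_apply)
    then show "c \<in> W"
      unfolding W_def by blast
  qed
  then obtain V where V: "V \<in> sets bernoulli_mu" "F -` V = V"
    "measure bernoulli_mu V = measure bernoulli_mu W"
    using measure_preserving_subinvariant_invariant_core[OF mp W_sets] by blast
  have "U \<subseteq> W"
    unfolding W_def using funpow_0[of F] by blast
  then have "measure bernoulli_mu V \<noteq> 0"
    using pos V(3) P.finite_measure_mono[OF \<open>U \<subseteq> W\<close> W_sets] by linarith
  then have "measure bernoulli_mu W = 1"
    using erg V unfolding ergodic_def by metis
  moreover have "{c. \<forall>t. (F ^^ t) c \<notin> U} = space bernoulli_mu - W"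
    by (auto simp: W_def)
  ultimately show ?thesis
    using P.prob_compl[OF W_sets] by simp
qed


subsection \<open>Window cylinders\<close>

definition window :: "nat \<Rightarrow> 'a config \<Rightarrow> 'a list" where
  "window N k = map (\<lambda>j. k (int j - int N)) [0..<2*N+1]"

definition window_cylinders :: "nat \<Rightarrow> 'a config set \<Rightarrow> 'a config set set" where
  "window_cylinders N K = (\<lambda>k. cyl (window N k) (- int N)) ` K"

lemma mem_cyl_window_iff: "c \<in> cyl (window N k) (- int N) \<longleftrightarrow> agree_on_window N c k"
proof
  assume c: "c \<in> cyl (window N k) (- int N)"
  show "agree_on_window N c k"
    unfolding agree_on_window_def
  proof (intro allI impI)
    fix i :: int
    assume "\<bar>i\<bar> \<le> int N"
    then have "nat (i + int N) < 2*N+1" "int (nat (i + int N)) = i + int N"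
      by auto
    then show "c i = k i"
      using c unfolding cyl_def window_def by (force simp del: upt_Suc)
  qed
next
  assume "agree_on_window N c k"
  then show "c \<in> cyl (window N k) (- int N)"
    by (auto simp: cyl_def window_def agree_on_window_def simp del: upt_Suc)
qed

lemma mem_Union_window_cylinders_iff:
  "c \<in> \<Union>(window_cylinders N K) \<longleftrightarrow> (\<exists>k\<in>K. agree_on_window N c k)"
  by (auto simp: window_cylinders_def mem_cyl_window_iff)

lemma length_window [simp]: "length (window N k) = 2*N+1"
  by (simp add: window_def)

lemma finite_window_cylinders: "finite (window_cylinders N (K :: ('a::finite) config set))"
proof -
  have "window N ` K \<subseteq> {w. length w = 2*N+1}"
    by auto
  then have "finite (window N ` K)"
    by (rule finite_subset) (simp add: finite_lists_length_eq[of "UNIV :: 'a set", simplified])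
  moreover have "window_cylinders N K = (\<lambda>w. cyl w (- int N)) ` window N ` K"
    by (simp add: window_cylinders_def image_image)
  ultimately show ?thesis
    by simp
qed

lemma window_cylinders_are_cylinders:
  assumes "U \<in> window_cylinders N K"
  shows "is_cylinder U"
proof -
  obtain k where "U = cyl (window N k) (- int N)"
    using assms by (auto simp: window_cylinders_def)
  moreover have "window N k \<noteq> []"
    using length_window[of N k] by (metis add_is_0 list.size(3) zero_neq_one)
  ultimately show ?thesis
    unfolding is_cylinder_def by blast
qed

lemma Union_window_cylinders_in_sets:
  "\<Union>(window_cylinders N K) \<in> sets (bernoulli_mu :: ('a::finite) config measure)"
  by (rule sets.finite_Union[OF finite_window_cylinders]) (auto simp: window_cylinders_def cyl_in_sets)

text \<open>The window neighbourhoods of a closed set decrease to the set itself, so continuity of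
  the measure from above makes them small when the set is null.\<close>

lemma closed_null_set_small_window_cover:
  fixes K :: "('a::finite) config set"
  assumes "K \<in> sets bernoulli_mu" "measure bernoulli_mu K = 0"
    and closed: "\<And>c. (\<And>N. \<exists>k\<in>K. agree_on_window N c k) \<Longrightarrow> c \<in> K"
    and "\<epsilon> > 0"
  obtains N where "measure bernoulli_mu (\<Union>(window_cylinders N K)) < \<epsilon>"
proof -
  interpret P: prob_space "bernoulli_mu :: 'a config measure" by (rule prob_space_bernoulli_mu)
  define C where "C N = \<Union>(window_cylinders N K)" for N
  have "decseq C"
  proof (rule decseq_SucI, rule subsetI)
    fix N c
    assume "c \<in> C (Suc N)"
    then obtain k where "k \<in> K" "agree_on_window (Suc N) c k"
      unfolding C_def mem_Union_window_cylinders_iff by blast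
    then show "c \<in> C N"
      unfolding C_def mem_Union_window_cylinders_iff agree_on_window_def by auto
  qed
  have "(\<Inter>N. C N) \<subseteq> K"
  proof
    fix c
    assume "c \<in> (\<Inter>N. C N)"
    then have "\<exists>k\<in>K. agree_on_window N c k" for N
      unfolding C_def mem_Union_window_cylinders_iff[symmetric] by blast
    then show "c \<in> K"
      by (rule closed)
  qed
  then have "measure bernoulli_mu (\<Inter>N. C N) = 0"
    using assms(1,2) P.finite_measure_mono[of _ K] by (simp add: measure_le_0_iff)
  moreover have "(\<lambda>N. measure bernoulli_mu (C N)) \<longlonglongrightarrow> measure bernoulli_mu (\<Inter>N. C N)"
    by (rule P.finite_Lim_measure_decseq[OF _ \<open>decseq C\<close>])
      (auto simp: C_def Union_window_cylinders_in_sets)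
  ultimately have "eventually (\<lambda>N. measure bernoulli_mu (C N) < \<epsilon>) sequentially"
    using \<open>\<epsilon> > 0\<close> by (intro order_tendstoD(2)) auto
  then show ?thesis
    using that by (auto simp: C_def eventually_sequentially)
qed

lemma locally_determined_never_visits_closed:
  assumes local: "\<And>t. locally_determined (F ^^ t)"
    and approx: "\<And>N. \<exists>k\<in>{c. \<forall>t. (F ^^ t) c \<notin> cyl w i}. agree_on_window N c k"
  shows "c \<in> {c. \<forall>t. (F ^^ t) c \<notin> cyl w i}"
proof (intro CollectI allI notI)
  fix t
  assume visits: "(F ^^ t) c \<in> cyl w i"
  obtain R where R: "\<And>c d. agree_on_window R c d \<Longrightarrow>
      agree_on_window (nat \<bar>i\<bar> + length w) ((F ^^ t) c) ((F ^^ t) d)"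
    using local[of t] unfolding locally_determined_def by blast
  obtain k where k: "\<forall>t. (F ^^ t) k \<notin> cyl w i" "agree_on_window R c k"
    using approx[of R] by blast
  have "(F ^^ t) k (i + int j) = w ! j" if "j < length w" for j
  proof -
    have "\<bar>i + int j\<bar> \<le> int (nat \<bar>i\<bar> + length w)"
      using that by linarith
    then show ?thesis
      using R[OF k(2)] visits that unfolding cyl_def agree_on_window_def by auto
  qed
  then have "(F ^^ t) k \<in> cyl w i"
    by (simp add: cyl_def)
  then show False
    using k(1) by blast
qed


lemma never_visits_in_sets:
  assumes "measure_preserving (F :: ('a::finite) config \<Rightarrow> 'a config)" "U \<in> sets bernoulli_mu"
  shows "{c. \<forall>t. (F ^^ t) c \<notin> U} \<in> sets bernoulli_mu"
proof -
  have "(\<Union>t. (F ^^ t) -` U) \<in> sets bernoulli_mu"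
    using measure_preserving_vimage_funpow_in_sets[OF assms] by (intro sets.countable_UN) auto
  moreover have "{c. \<forall>t. (F ^^ t) c \<notin> U} = space bernoulli_mu - (\<Union>t. (F ^^ t) -` U)"
    by auto
  ultimately show ?thesis
    using sets.compl_sets by metis
qed

lemma visits_or_near_never_visits:
  "\<exists>t. (F ^^ t) c \<in> U \<union> \<Union>(window_cylinders N {c. \<forall>t. (F ^^ t) c \<notin> U})"
proof (cases "\<forall>t. (F ^^ t) c \<notin> U")
  case True
  then have "(F ^^ 0) c \<in> \<Union>(window_cylinders N {c. \<forall>t. (F ^^ t) c \<notin> U})"
    unfolding mem_Union_window_cylinders_iff agree_on_window_def by auto
  then show ?thesis
    by blast
next
  case False
  then show ?thesis
    by blast
qed

lemma small_positive_cylinder: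
  fixes \<delta> :: real
  assumes "CARD('a) \<ge> 2" "\<delta> > 0"
  obtains w :: "('a::finite) list"
  where "w \<noteq> []" "0 < measure bernoulli_mu (cyl w 0)" "measure bernoulli_mu (cyl w 0) < \<delta>"
proof -
  define q where "q = 1 / real CARD('a)"
  have q: "0 < q" "q < 1"
    using assms(1) by (auto simp: q_def)
  obtain n where n: "q ^ n < \<delta>"
    using real_arch_pow_inv[of \<delta> q] q assms(2) by auto
  define w where "w = replicate (Suc n) (undefined :: 'a)"
  have w_measure: "measure bernoulli_mu (cyl w 0) = q * q ^ n"
    unfolding w_def q_def measure_cyl_replicate by simp
  have "q * q ^ n \<le> q ^ n"
    using q by (simp add: mult_left_le_one_le)
  then have "q * q ^ n < \<delta>"
    using n by linarith
  then show ?thesis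
    using that[of w] w_measure q by (simp add: w_def)
qed

theorem lemma8:
  fixes F :: "('a::finite) config \<Rightarrow> 'a config" and \<epsilon> :: real
  assumes "CARD('a) \<ge> 2"
    and "cellular_automaton F"
    and "ergodic F"
    and "\<epsilon> > 0"
  shows "\<exists>\<U> :: 'a config set set. finite \<U> \<and> (\<forall>U\<in>\<U>. is_cylinder U) \<and>
           measure bernoulli_mu (\<Union>\<U>) < \<epsilon> \<and>
           {c. \<exists>t::nat. (F ^^ t) c \<in> \<Union>\<U>} = UNIV"
proof -
  obtain w :: "'a list" where w: "w \<noteq> []" "0 < measure bernoulli_mu (cyl w 0)"
    "measure bernoulli_mu (cyl w 0) < \<epsilon> / 2"
    using small_positive_cylinder assms(1,4) half_gt_zero by blast
  have "measure_preserving F"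
    using assms(3) by (simp add: ergodic_def)
  define K where "K = {c. \<forall>t. (F ^^ t) c \<notin> cyl w 0}"
  have K_sets: "K \<in> sets bernoulli_mu"
    unfolding K_def by (rule never_visits_in_sets[OF \<open>measure_preserving F\<close> cyl_in_sets])
  have K_null: "measure bernoulli_mu K = 0"
    unfolding K_def by (rule ergodic_almost_surely_visits[OF assms(3) cyl_in_sets w(2)])
  obtain N where N: "measure bernoulli_mu (\<Union>(window_cylinders N K)) < \<epsilon> / 2"
    using closed_null_set_small_window_cover[OF K_sets K_null _ half_gt_zero[OF assms(4)]]
      locally_determined_never_visits_closed[OF cellular_automaton_funpow_locally_determined[OF assms(2)]]
    unfolding K_def by blast
  show ?thesis
  proof (intro exI[of _ "insert (cyl w 0) (window_cylinders N K)"] conjI)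
    show "finite (insert (cyl w 0) (window_cylinders N K))"
      using finite_window_cylinders by simp
    show "\<forall>V\<in>insert (cyl w 0) (window_cylinders N K). is_cylinder V"
      using window_cylinders_are_cylinders w(1) unfolding is_cylinder_def by blast
    show "measure bernoulli_mu (\<Union>(insert (cyl w 0) (window_cylinders N K))) < \<epsilon>"
      using measure_Un_le[OF cyl_in_sets Union_window_cylinders_in_sets, of w 0 N K] w(3) N by simp
    show "{c. \<exists>t. (F ^^ t) c \<in> \<Union>(insert (cyl w 0) (window_cylinders N K))} = UNIV"
      using visits_or_near_never_visits[of F _ "cyl w 0" N] by (simp add: K_def)
  qed
qed

end
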